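(* Let $(M,\rho)$ be a metric space and $f:[a,b]\to M$ continuous. Suppose $md(f,x)$ exists for all $x\in[a,b]$ except for an at most countable set of points, and $x\mapsto md(f,x)$ is Lebesgue integrable on $[a,b]$. Then $f$ is absolutely continuous on $[a,b]$.
   Context: $md(f,x)=\lim_{t\to0,\ x+t\in[a,b]}\rho(f(x+t),f(x))/|t|$ when it exists. Absolute continuity of $f$: for every $\varepsilon>0$ there is $\delta>0$ such that for non-overlapping intervals $[a_i,b_i]\subset[a,b]$ with $\sum_i(b_i-a_i)<\delta$ one has $\sum_i\rho(f(b_i),f(a_i))<\varepsilon$. *)

theory Defs
  imports "HOL-Analysis.Analysis"
begin

definition md_exists :: "(real \<Rightarrow> 'a::metric_space) \<Rightarrow> real \<Rightarrow> real \<Rightarrow> real \<Rightarrow> bool" where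
  "md_exists f a b x \<longleftrightarrow>
     (\<exists>L. ((\<lambda>t. dist (f (x + t)) (f x) / \<bar>t\<bar>) \<longlongrightarrow> L)
            (at 0 within {t. x + t \<in> {a..b}}))"

definition md :: "(real \<Rightarrow> 'a::metric_space) \<Rightarrow> real \<Rightarrow> real \<Rightarrow> real \<Rightarrow> real" where
  "md f a b x = Lim (at 0 within {t. x + t \<in> {a..b}}) (\<lambda>t. dist (f (x + t)) (f x) / \<bar>t\<bar>)"

definition abs_continuous_on_interval :: "real \<Rightarrow> real \<Rightarrow> (real \<Rightarrow> 'a::metric_space) \<Rightarrow> bool" where
  "abs_continuous_on_interval a b f \<longleftrightarrow>
     (\<forall>\<epsilon>>0. \<exists>\<delta>>0. \<forall>(n::nat) (u::nat \<Rightarrow> real) (v::nat \<Rightarrow> real).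
        (\<forall>i<n. a \<le> u i \<and> u i \<le> v i \<and> v i \<le> b) \<longrightarrow>
        (\<forall>i<n. \<forall>j<n. i \<noteq> j \<longrightarrow> {u i<..<v i} \<inter> {u j<..<v j} = {}) \<longrightarrow>
        (\<Sum>i<n. v i - u i) < \<delta> \<longrightarrow>
        (\<Sum>i<n. dist (f (v i)) (f (u i))) < \<epsilon>)"

end

(*
  Fix a gauge-fine tagged division of a subinterval [u, v]. By the triangle inequality,
  dist (f v) (f u) is at most the sum of the oscillations of f over the division
  intervals. At a tag outside the countable set E the metric derivative bounds the
  oscillation by (md + \<epsilon>) times the length, which yields a Riemann sum of |md|.
  At a tag carrying index n in an enumeration of E, continuity lets the gauge make the
  oscillation smaller than a constant times 2^-n, so these tags contribute arbitrarily
  little in total. Hence dist (f v) (f u) is bounded by the integral of |md| over [u, v],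
  and absolute continuity of f follows from that of the Lebesgue integral.
*)

theory Submission
  imports Defs
begin

lemma integral_truncation_tail_tendsto_0:
  fixes g :: "'a \<Rightarrow> real"
  assumes g: "integrable M g" "\<And>x. 0 \<le> g x"
  shows "(\<lambda>N. LINT x|M. g x - min (g x) (real N)) \<longlonglongrightarrow> 0"
proof -
  have "(\<lambda>N. LINT x|M. g x - min (g x) (real N)) \<longlonglongrightarrow> (LINT x|M. 0)"
  proof (rule integral_dominated_convergence[OF _ _ g(1)])
    show "(\<lambda>x. g x - min (g x) (real N)) \<in> borel_measurable M" for N
      using borel_measurable_integrable[OF g(1)] by measurable
    show "AE x in M. (\<lambda>N. g x - min (g x) (real N)) \<longlonglongrightarrow> 0"
    proof (rule AE_I2)
      fix x
      obtain N0 :: nat where "g x \<le> real N0" using real_arch_simple by blast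
      then have "\<forall>N\<ge>N0. g x - min (g x) (real N) = 0"
        by (auto simp: min_def)
      then show "(\<lambda>N. g x - min (g x) (real N)) \<longlonglongrightarrow> 0"
        by (intro tendsto_eventually) (auto simp: eventually_sequentially)
    qed
    show "AE x in M. norm (g x - min (g x) (real N)) \<le> g x" for N
      using g(2) by (intro AE_I2) auto
  qed simp
  then show ?thesis by simp
qed

lemma set_integral_small_measure:
  fixes g :: "'a \<Rightarrow> real"
  assumes g: "integrable M g" "\<And>x. 0 \<le> g x" and "0 < \<epsilon>"
  obtains \<delta> where "0 < \<delta>"
    "\<And>A. A \<in> fmeasurable M \<Longrightarrow> measure M A < \<delta> \<Longrightarrow> (LINT x:A|M. g x) < \<epsilon>"
proof -
  define tail where "tail N x = g x - min (g x) (real N)" for N x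
  have tail_int: "integrable M (tail N)" for N
    using borel_measurable_integrable[OF g(1)] g(2) unfolding tail_def
    by (intro Bochner_Integration.integrable_bound[OF g(1)]) (measurable, auto)
  have "(\<lambda>N. LINT x|M. tail N x) \<longlonglongrightarrow> 0"
    unfolding tail_def by (rule integral_truncation_tail_tendsto_0[OF g])
  then have "\<forall>\<^sub>F N in sequentially. (LINT x|M. tail N x) < \<epsilon>/2"
    using \<open>0 < \<epsilon>\<close> by (intro order_tendstoD(2)) auto
  then obtain N where N: "(LINT x|M. tail N x) < \<epsilon>/2"
    unfolding eventually_sequentially by blast
  show ?thesis
  proof
    show "0 < \<epsilon> / (2 * (real N + 1))" using \<open>0 < \<epsilon>\<close> by simp
    fix A assume A: "A \<in> fmeasurable M" and small: "measure M A < \<epsilon> / (2 * (real N + 1))"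
    have ind: "integrable M (indicator A :: 'a \<Rightarrow> real)"
      using A by (auto simp: fmeasurable_def)
    have "(LINT x:A|M. g x) \<le> (LINT x|M. tail N x + real N * indicator A x)"
      unfolding set_lebesgue_integral_def
    proof (rule integral_mono)
      show "integrable M (\<lambda>x. indicator A x *\<^sub>R g x)"
        using A g(1) by (intro integrable_mult_indicator) auto
      show "integrable M (\<lambda>x. tail N x + real N * indicator A x)"
        using tail_int ind by auto
      show "indicator A x *\<^sub>R g x \<le> tail N x + real N * indicator A x" for x
        using g(2)[of x] by (auto simp: tail_def indicator_def min_def)
    qed
    also have "\<dots> = (LINT x|M. tail N x) + real N * measure M A"
      using tail_int ind A by (simp add: fmeasurable_def Int_absorb2 sets.sets_into_space)
    also have "\<dots> < \<epsilon>/2 + real N * (\<epsilon> / (2 * (real N + 1)))"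
      using N small by (intro add_less_le_mono mult_left_mono) auto
    also have "\<dots> \<le> \<epsilon>"
      using \<open>0 < \<epsilon>\<close> by (simp add: field_simps)
    finally show "(LINT x:A|M. g x) < \<epsilon>" .
  qed
qed

lemma tagged_division_real_interval:
  assumes "D tagged_division_of {u..v::real}" "(x, K) \<in> D"
  obtains c d where "K = {c..d}" "c \<le> x" "x \<le> d"
proof -
  obtain c d where "K = cbox c d" using tagged_division_ofD(4)[OF assms] by blast
  moreover have "x \<in> K" using tagged_division_ofD(2)[OF assms] .
  ultimately show ?thesis using that by auto
qed

text \<open>Interiors of distinct intervals of a division are disjoint, so a tag can lie in at
  most one nondegenerate interval extending to its left and one extending to its right.\<close>

lemma card_tagged_division_same_tag_le_2:
  assumes D: "D tagged_division_of {u..v::real}"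
  shows "card {p \<in> D. fst p = x \<and> Inf (snd p) < Sup (snd p)} \<le> 2"
proof -
  let ?S = "{p \<in> D. fst p = x \<and> Inf (snd p) < Sup (snd p)}"
  have "inj_on (\<lambda>p. Inf (snd p) < x) ?S"
  proof (rule inj_onI)
    fix p q assume p: "p \<in> ?S" and q: "q \<in> ?S" and side: "(Inf (snd p) < x) = (Inf (snd q) < x)"
    obtain K1 K2 where pq: "p = (x, K1)" "q = (x, K2)" using p q by (cases p, cases q) auto
    have "(x, K1) \<in> D" "(x, K2) \<in> D" using p q pq by auto
    obtain c1 d1 where K1: "K1 = {c1..d1}" "c1 \<le> x" "x \<le> d1"
      using tagged_division_real_interval[OF D \<open>(x, K1) \<in> D\<close>] .
    obtain c2 d2 where K2: "K2 = {c2..d2}" "c2 \<le> x" "x \<le> d2"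
      using tagged_division_real_interval[OF D \<open>(x, K2) \<in> D\<close>] .
    have "c1 < d1" "c2 < d2" using p q pq K1 K2 by auto
    have "\<exists>z. c1 < z \<and> z < d1 \<and> c2 < z \<and> z < d2"
    proof (cases "c1 < x")
      case True
      then have "c2 < x" using side pq K1 K2 by simp
      then show ?thesis using True K1 K2 \<open>c1 < d1\<close> \<open>c2 < d2\<close>
        by (intro exI[of _ "(max c1 c2 + x) / 2"]) (auto simp: max_def)
    next
      case False
      then have "c2 = x" "c1 = x" using side pq K1 K2 by simp_all
      then show ?thesis using K1 K2 \<open>c1 < d1\<close> \<open>c2 < d2\<close>
        by (intro exI[of _ "(x + min d1 d2) / 2"]) (auto simp: min_def)
    qed
    then have "interior K1 \<inter> interior K2 \<noteq> {}" using K1 K2 by auto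
    then show "p = q"
      using tagged_division_ofD(5)[OF D \<open>(x, K1) \<in> D\<close> \<open>(x, K2) \<in> D\<close>] pq by auto
  qed
  then have "card ?S \<le> card (UNIV :: bool set)"
    by (rule card_inj_on_le) auto
  then show ?thesis by simp
qed

lemma sum_tagged_division_same_tag_le:
  fixes f :: "real \<Rightarrow> 'a::metric_space"
  assumes D: "D tagged_division_of {u..v}" and "0 \<le> \<eta>"
    and bound: "\<And>K. (x, K) \<in> D \<Longrightarrow> dist (f (Sup K)) (f (Inf K)) \<le> \<eta>"
  shows "(\<Sum>p\<in>{p \<in> D. fst p = x}. dist (f (Sup (snd p))) (f (Inf (snd p)))) \<le> 2 * \<eta>"
proof -
  let ?S = "{p \<in> D. fst p = x \<and> Inf (snd p) < Sup (snd p)}"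
  have fin: "finite {p \<in> D. fst p = x}" using tagged_division_ofD(1)[OF D] by simp
  have degenerate: "dist (f (Sup (snd p))) (f (Inf (snd p))) = 0"
    if "p \<in> D" and "\<not> Inf (snd p) < Sup (snd p)" for p
  proof -
    have "(fst p, snd p) \<in> D" using \<open>p \<in> D\<close> by simp
    then obtain c d where "snd p = {c..d}" "c \<le> fst p" "fst p \<le> d"
      by (rule tagged_division_real_interval[OF D])
    moreover from this that(2) have "c = d" by simp
    ultimately show ?thesis by simp
  qed
  have "(\<Sum>p\<in>{p \<in> D. fst p = x}. dist (f (Sup (snd p))) (f (Inf (snd p))))
      = (\<Sum>p\<in>?S. dist (f (Sup (snd p))) (f (Inf (snd p))))"
    using fin degenerate by (intro sum.mono_neutral_right) auto
  also have "\<dots> \<le> of_nat (card ?S) * \<eta>"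
    using bound by (intro sum_bounded_above) force
  also have "\<dots> \<le> 2 * \<eta>"
    using card_tagged_division_same_tag_le_2[OF D, of x] \<open>0 \<le> \<eta>\<close> by (intro mult_right_mono) auto
  finally show ?thesis .
qed

lemma sum_half_power_to_nat_on_le_2:
  assumes "countable E" "finite T" "T \<subseteq> E"
  shows "(\<Sum>y\<in>T. (1/2::real) ^ to_nat_on E y) \<le> 2"
proof -
  have inj: "inj_on (to_nat_on E) T"
    using inj_on_subset[OF inj_on_to_nat_on] assms by blast
  have "(\<Sum>y\<in>T. (1/2::real) ^ to_nat_on E y) = (\<Sum>n\<in>to_nat_on E ` T. (1/2) ^ n)"
    by (simp add: sum.reindex[OF inj])
  also have "\<dots> \<le> (\<Sum>n. (1/2) ^ n)"
    using assms by (intro sum_le_suminf summable_geometric) auto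
  also have "\<dots> = 2"
    using suminf_geometric[of "1/2::real"] by simp
  finally show ?thesis .
qed

lemma sum_tagged_division_countable_tags_le:
  fixes f :: "real \<Rightarrow> 'a::metric_space"
  assumes D: "D tagged_division_of {u..v}" and "countable E" and "0 \<le> c"
    and bound: "\<And>y K z. (y, K) \<in> D \<Longrightarrow> y \<in> E \<Longrightarrow> z \<in> K \<Longrightarrow>
      dist (f z) (f y) \<le> c * (1/2) ^ to_nat_on E y"
  shows "(\<Sum>p\<in>{p \<in> D. fst p \<in> E}. dist (f (Sup (snd p))) (f (Inf (snd p)))) \<le> 8 * c"
proof -
  let ?T = "fst ` {p \<in> D. fst p \<in> E}"
  have fin: "finite D" using tagged_division_ofD(1)[OF D] .
  have osc: "dist (f (Sup K)) (f (Inf K)) \<le> 2 * (c * (1/2) ^ to_nat_on E y)"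
    if yK: "(y, K) \<in> D" and "y \<in> E" for y K
  proof -
    obtain a b where "K = {a..b}" "a \<le> y" "y \<le> b"
      using tagged_division_real_interval[OF D yK] .
    then have "Sup K \<in> K" "Inf K \<in> K" by auto
    then show ?thesis
      using bound[OF yK \<open>y \<in> E\<close> \<open>Sup K \<in> K\<close>] bound[OF yK \<open>y \<in> E\<close> \<open>Inf K \<in> K\<close>]
        dist_triangle2[of "f (Sup K)" "f (Inf K)" "f y"]
      by linarith
  qed
  have "(\<Sum>p\<in>{p \<in> D. fst p \<in> E}. dist (f (Sup (snd p))) (f (Inf (snd p))))
      = (\<Sum>y\<in>?T. \<Sum>p\<in>{p \<in> D. fst p = y}. dist (f (Sup (snd p))) (f (Inf (snd p))))"
    using fin by (subst sum.group[symmetric, of _ ?T fst]) (auto intro!: sum.cong)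
  also have "\<dots> \<le> (\<Sum>y\<in>?T. 2 * (2 * (c * (1/2) ^ to_nat_on E y)))"
    using osc \<open>0 \<le> c\<close> by (intro sum_mono sum_tagged_division_same_tag_le[OF D]) auto
  also have "\<dots> = 4 * c * (\<Sum>y\<in>?T. (1/2) ^ to_nat_on E y)"
    by (simp add: sum_distrib_left mult.assoc)
  also have "\<dots> \<le> 4 * c * 2"
    using fin \<open>countable E\<close> \<open>0 \<le> c\<close>
    by (intro mult_left_mono sum_half_power_to_nat_on_le_2) auto
  finally show ?thesis by simp
qed

lemma dist_le_sum_tagged_division:
  fixes f :: "real \<Rightarrow> 'a::metric_space"
  assumes "u \<le> v" "D tagged_division_of {u..v}"
  shows "dist (f v) (f u) \<le> (\<Sum>(x, K)\<in>D. dist (f (Sup K)) (f (Inf K)))"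
proof -
  have "dist (f v) (f u) = (\<Sum>(x, K)\<in>D. dist (f (Sup K)) (f u) - dist (f (Inf K)) (f u))"
    using additive_tagged_division_1[OF assms, of "\<lambda>y. dist (f y) (f u)"] by simp
  also have "\<dots> \<le> (\<Sum>(x, K)\<in>D. dist (f (Sup K)) (f (Inf K)))"
    using dist_triangle by (intro sum_mono) (fastforce simp: case_prod_beta diff_le_eq)
  finally show ?thesis .
qed

lemma dist_le_of_local_bound:
  fixes f :: "real \<Rightarrow> 'a::metric_space"
  assumes "c \<le> x" "x \<le> d" and bound: "\<And>y. y \<in> {c..d} \<Longrightarrow> dist (f y) (f x) \<le> L * \<bar>y - x\<bar>"
  shows "dist (f d) (f c) \<le> L * (d - c)"
proof -
  have "dist (f d) (f c) \<le> dist (f d) (f x) + dist (f c) (f x)"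
    by (rule dist_triangle2)
  also have "\<dots> \<le> L * (d - x) + L * (x - c)"
    using bound[of d] bound[of c] assms(1,2) by (intro add_mono) auto
  finally show ?thesis by (simp add: algebra_simps)
qed

lemma sum_tagged_division_regular_tags_le:
  fixes f :: "real \<Rightarrow> 'a::metric_space" and g :: "real \<Rightarrow> real"
  assumes D: "D tagged_division_of {u..v}" and "u \<le> v" "0 \<le> \<epsilon>"
    and bound: "\<And>x K y. (x, K) \<in> D \<Longrightarrow> x \<notin> E \<Longrightarrow> y \<in> K \<Longrightarrow>
      dist (f y) (f x) \<le> (g x + \<epsilon>) * \<bar>y - x\<bar>"
  shows "(\<Sum>p\<in>{p \<in> D. fst p \<notin> E}. dist (f (Sup (snd p))) (f (Inf (snd p))))
    \<le> (\<Sum>(x, K)\<in>D. measure lborel K * (if x \<in> E then 0 else g x)) + \<epsilon> * (v - u)"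
proof -
  have tag: "dist (f (Sup K)) (f (Inf K)) \<le> (g x + \<epsilon>) * measure lborel K"
    if xK: "(x, K) \<in> D" and "x \<notin> E" for x K
  proof -
    obtain c d where K: "K = {c..d}" "c \<le> x" "x \<le> d"
      using tagged_division_real_interval[OF D xK] .
    have "dist (f d) (f c) \<le> (g x + \<epsilon>) * (d - c)"
      using bound[OF xK \<open>x \<notin> E\<close>] K by (intro dist_le_of_local_bound) auto
    then show ?thesis using K by simp
  qed
  have "(\<Sum>p\<in>{p \<in> D. fst p \<notin> E}. dist (f (Sup (snd p))) (f (Inf (snd p))))
      = (\<Sum>(x, K)\<in>D. if x \<notin> E then dist (f (Sup K)) (f (Inf K)) else 0)"
    using tagged_division_ofD(1)[OF D] by (simp add: sum.inter_filter split_beta)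
  also have "\<dots> \<le> (\<Sum>(x, K)\<in>D. measure lborel K * (if x \<in> E then 0 else g x) + \<epsilon> * measure lborel K)"
    using tag \<open>0 \<le> \<epsilon>\<close> by (intro sum_mono) (auto simp: algebra_simps)
  also have "\<dots> = (\<Sum>(x, K)\<in>D. measure lborel K * (if x \<in> E then 0 else g x)) + \<epsilon> * (v - u)"
    using additive_content_tagged_division[of D u v] D \<open>u \<le> v\<close>
    by (simp add: sum.distrib sum_distrib_left[symmetric] split_beta)
  finally show ?thesis .
qed

lemma negligible_countable:
  assumes "countable E"
  shows "negligible E"
  using negligible_countable_Union[of "(\<lambda>x. {x}) ` E"] assms by (auto simp: negligible_sing)

lemma gauge_local_oscillation_bounds:
  fixes f :: "real \<Rightarrow> 'a::metric_space" and g :: "real \<Rightarrow> real"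
  assumes cont: "continuous_on {u..v} f" and "0 < \<epsilon>" and "\<And>x. 0 < w x"
    and local_bound: "\<And>x e. x \<in> {u..v} - E \<Longrightarrow> 0 < e \<Longrightarrow>
      \<exists>d>0. \<forall>y\<in>{u..v}. \<bar>y - x\<bar> < d \<longrightarrow> dist (f y) (f x) \<le> (g x + e) * \<bar>y - x\<bar>"
  obtains \<gamma> where "gauge \<gamma>"
    "\<And>D x K y. D tagged_division_of {u..v} \<Longrightarrow> \<gamma> fine D \<Longrightarrow> (x, K) \<in> D \<Longrightarrow> y \<in> K \<Longrightarrow>
      (x \<in> E \<longrightarrow> dist (f y) (f x) < w x) \<and>
      (x \<notin> E \<longrightarrow> dist (f y) (f x) \<le> (g x + \<epsilon>) * \<bar>y - x\<bar>)"
proof -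
  have "\<forall>x\<in>{u..v}. \<exists>d>0. \<forall>y\<in>{u..v}. dist y x < d \<longrightarrow> dist (f y) (f x) < w x"
    using cont \<open>\<And>x. 0 < w x\<close> unfolding continuous_on_iff by blast
  then obtain rE where rE: "\<And>x. x \<in> {u..v} \<Longrightarrow> 0 < rE x \<and>
      (\<forall>y\<in>{u..v}. dist y x < rE x \<longrightarrow> dist (f y) (f x) < w x)"
    by metis
  obtain rM where rM: "\<And>x. x \<in> {u..v} - E \<Longrightarrow> 0 < rM x \<and>
      (\<forall>y\<in>{u..v}. \<bar>y - x\<bar> < rM x \<longrightarrow> dist (f y) (f x) \<le> (g x + \<epsilon>) * \<bar>y - x\<bar>)"
    using local_bound[OF _ \<open>0 < \<epsilon>\<close>] by metis
  define r where "r x = (if x \<notin> {u..v} then 1 else if x \<in> E then rE x else rM x)" for x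
  show ?thesis
  proof
    show "gauge (\<lambda>x. ball x (r x))"
      using rE rM by (intro gauge_ball_dependent) (auto simp: r_def)
    fix D x K y
    assume D: "D tagged_division_of {u..v}" and "(\<lambda>x. ball x (r x)) fine D"
      and xK: "(x, K) \<in> D" and "y \<in> K"
    then have "K \<subseteq> ball x (r x)" by (auto simp: fine_def)
    then have "x \<in> {u..v}" "y \<in> {u..v}" "dist y x < r x"
      using tagged_division_ofD(2,3)[OF D xK] \<open>y \<in> K\<close> by (auto simp: dist_commute)
    then show "(x \<in> E \<longrightarrow> dist (f y) (f x) < w x) \<and>
        (x \<notin> E \<longrightarrow> dist (f y) (f x) \<le> (g x + \<epsilon>) * \<bar>y - x\<bar>)"
      using rE[of x] rM[of x] by (auto simp: r_def dist_real_def)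
  qed
qed

lemma dist_le_integral_of_metric_derivative_bound:
  fixes f :: "real \<Rightarrow> 'a::metric_space" and g :: "real \<Rightarrow> real"
  assumes cont: "continuous_on {u..v} f" and "u \<le> v" and "countable E"
    and local_bound: "\<And>x e. x \<in> {u..v} - E \<Longrightarrow> 0 < e \<Longrightarrow>
      \<exists>d>0. \<forall>y\<in>{u..v}. \<bar>y - x\<bar> < d \<longrightarrow> dist (f y) (f x) \<le> (g x + e) * \<bar>y - x\<bar>"
    and g: "(g has_integral I) {u..v}"
  shows "dist (f v) (f u) \<le> I"
proof (rule field_le_epsilon)
  fix e :: real assume "0 < e"
  define h where "h x = (if x \<in> E then 0 else g x)" for x
  have h: "(h has_integral I) {u..v}"
    by (rule has_integral_spike[OF negligible_countable[OF \<open>countable E\<close>] _ g]) (simp add: h_def)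
  obtain \<gamma>1 where "gauge \<gamma>1" and riemann: "\<And>D. D tagged_division_of {u..v} \<Longrightarrow> \<gamma>1 fine D \<Longrightarrow>
      \<bar>(\<Sum>(x, K)\<in>D. measure lborel K * h x) - I\<bar> < e/4"
    using h[unfolded has_integral_real, rule_format, of "e/4"] \<open>0 < e\<close> by auto
  define \<epsilon> where "\<epsilon> = e / (4 * (v - u + 1))"
  have "0 < \<epsilon>" "\<epsilon> * (v - u) \<le> e/4"
    using \<open>0 < e\<close> \<open>u \<le> v\<close> by (simp_all add: \<epsilon>_def field_simps)
  obtain \<gamma>2 where "gauge \<gamma>2" and osc: "\<And>D x K y. D tagged_division_of {u..v} \<Longrightarrow> \<gamma>2 fine D \<Longrightarrow>
      (x, K) \<in> D \<Longrightarrow> y \<in> K \<Longrightarrow>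
      (x \<in> E \<longrightarrow> dist (f y) (f x) < e/32 * (1/2) ^ to_nat_on E x) \<and>
      (x \<notin> E \<longrightarrow> dist (f y) (f x) \<le> (g x + \<epsilon>) * \<bar>y - x\<bar>)"
    by (rule gauge_local_oscillation_bounds[where E = E and w = "\<lambda>x. e/32 * (1/2) ^ to_nat_on E x",
          OF cont \<open>0 < \<epsilon>\<close> _ local_bound]) (use \<open>0 < e\<close> in auto)
  obtain D where D: "D tagged_division_of {u..v}" and "(\<lambda>x. \<gamma>1 x \<inter> \<gamma>2 x) fine D"
    using fine_division_exists_real[OF gauge_Int[OF \<open>gauge \<gamma>1\<close> \<open>gauge \<gamma>2\<close>]] by blast
  then have "\<gamma>1 fine D" "\<gamma>2 fine D" by (auto simp: fine_Int)
  let ?d = "\<lambda>K. dist (f (Sup K)) (f (Inf K))"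
  have exceptional: "(\<Sum>p\<in>{p \<in> D. fst p \<in> E}. ?d (snd p)) \<le> 8 * (e/32)"
  proof (rule sum_tagged_division_countable_tags_le[OF D \<open>countable E\<close>])
    fix x K y assume "(x, K) \<in> D" "x \<in> E" "y \<in> K"
    then show "dist (f y) (f x) \<le> e/32 * (1/2) ^ to_nat_on E x"
      using osc[OF D \<open>\<gamma>2 fine D\<close>] less_imp_le by blast
  qed (use \<open>0 < e\<close> in simp)
  have regular: "(\<Sum>p\<in>{p \<in> D. fst p \<notin> E}. ?d (snd p))
      \<le> (\<Sum>(x, K)\<in>D. measure lborel K * h x) + \<epsilon> * (v - u)"
    unfolding h_def
  proof (rule sum_tagged_division_regular_tags_le[OF D \<open>u \<le> v\<close>])
    fix x K y assume "(x, K) \<in> D" "x \<notin> E" "y \<in> K"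
    then show "dist (f y) (f x) \<le> (g x + \<epsilon>) * \<bar>y - x\<bar>"
      using osc[OF D \<open>\<gamma>2 fine D\<close>] by blast
  qed (use \<open>0 < \<epsilon>\<close> in simp)
  have "dist (f v) (f u) \<le> (\<Sum>(x, K)\<in>D. ?d K)"
    by (rule dist_le_sum_tagged_division[OF \<open>u \<le> v\<close> D])
  also have "\<dots> = (\<Sum>p\<in>{p \<in> D. fst p \<in> E}. ?d (snd p)) + (\<Sum>p\<in>{p \<in> D. fst p \<notin> E}. ?d (snd p))"
    using tagged_division_ofD(1)[OF D]
    by (subst sum.union_disjoint[symmetric]) (auto intro!: sum.cong simp: split_beta)
  also have "\<dots> \<le> I + e"
    using exceptional regular riemann[OF D \<open>\<gamma>1 fine D\<close>] \<open>\<epsilon> * (v - u) \<le> e/4\<close> by linarith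
  finally show "dist (f v) (f u) \<le> I + e" .
qed

lemma md_local_bound:
  fixes f :: "real \<Rightarrow> 'a::metric_space"
  assumes "x \<in> {a..b}" "md_exists f a b x" "0 < e"
  shows "\<exists>d>0. \<forall>y\<in>{a..b}. \<bar>y - x\<bar> < d \<longrightarrow> dist (f y) (f x) \<le> (md f a b x + e) * \<bar>y - x\<bar>"
proof (cases "a < b")
  case False
  \<comment> \<open>the limit filter is trivial and md is a junk value, but only y = x is in range\<close>
  then have "{a..b} = {x}" using assms(1) by auto
  then show ?thesis by (intro exI[of _ 1]) auto
next
  case True
  let ?F = "at 0 within {t. x + t \<in> {a..b}}"
  obtain L where L: "((\<lambda>t. dist (f (x + t)) (f x) / \<bar>t\<bar>) \<longlongrightarrow> L) ?F"
    using assms(2) unfolding md_exists_def by blast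
  have "{t. x + t \<in> {a..b}} = {a - x..b - x}" by auto
  then have "?F \<noteq> bot"
    using True assms(1) by (simp add: trivial_limit_within)
  then have "md f a b x = L"
    unfolding md_def using L by (rule tendsto_Lim)
  then have "\<forall>\<^sub>F t in ?F. dist (f (x + t)) (f x) / \<bar>t\<bar> < md f a b x + e"
    using L \<open>0 < e\<close> by (intro order_tendstoD(2)) auto
  then obtain d where "0 < d" and d: "\<And>t. x + t \<in> {a..b} \<Longrightarrow> t \<noteq> 0 \<Longrightarrow> \<bar>t\<bar> < d \<Longrightarrow>
      dist (f (x + t)) (f x) / \<bar>t\<bar> < md f a b x + e"
    unfolding eventually_at by (auto simp: dist_real_def)
  have "dist (f y) (f x) \<le> (md f a b x + e) * \<bar>y - x\<bar>" if "y \<in> {a..b}" "\<bar>y - x\<bar> < d" for y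
    using d[of "y - x"] that by (cases "y = x") (auto simp: divide_less_eq less_imp_le)
  then show ?thesis using \<open>0 < d\<close> by blast
qed

lemma dist_le_set_integral_of_md_le:
  fixes f :: "real \<Rightarrow> 'a::metric_space"
  assumes cont: "continuous_on {a..b} f" and "countable E"
    and md: "\<forall>x\<in>{a..b} - E. md_exists f a b x"
    and G: "set_integrable lborel {u<..<v} G" "\<And>x. x \<in> {u..v} - E \<Longrightarrow> md f a b x \<le> G x"
    and "a \<le> u" "u \<le> v" "v \<le> b"
  shows "dist (f v) (f u) \<le> (LINT x:{u<..<v}|lborel. G x)"
proof (rule dist_le_integral_of_metric_derivative_bound[OF _ \<open>u \<le> v\<close> \<open>countable E\<close>])
  show "continuous_on {u..v} f"
    using assms(6-8) by (intro continuous_on_subset[OF cont]) auto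
  show "(G has_integral (LINT x:{u<..<v}|lborel. G x)) {u..v}"
    unfolding has_integral_Icc_iff_Ioo set_borel_integral_eq_integral(2)[OF G(1)]
    using set_borel_integral_eq_integral(1)[OF G(1)] by (rule integrable_integral)
  fix x e :: real assume x: "x \<in> {u..v} - E" and "0 < e"
  then have "x \<in> {a..b}" using assms(6-8) by auto
  then obtain d where "0 < d"
    and d: "\<forall>y\<in>{a..b}. \<bar>y - x\<bar> < d \<longrightarrow> dist (f y) (f x) \<le> (md f a b x + e) * \<bar>y - x\<bar>"
    using md_local_bound[OF _ _ \<open>0 < e\<close>] md x by blast
  have "(md f a b x + e) * \<bar>y - x\<bar> \<le> (G x + e) * \<bar>y - x\<bar>" for y
    using G(2)[OF x] by (intro mult_right_mono) auto
  then show "\<exists>d>0. \<forall>y\<in>{u..v}. \<bar>y - x\<bar> < d \<longrightarrow> dist (f y) (f x) \<le> (G x + e) * \<bar>y - x\<bar>"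
    using \<open>0 < d\<close> d assms(6-8) by (meson atLeastAtMost_iff order_trans)
qed

lemma abs_continuous_on_interval_of_dist_le_set_integral:
  fixes f :: "real \<Rightarrow> 'a::metric_space"
  assumes G: "integrable lborel G" "\<And>x. 0 \<le> G x"
    and bound: "\<And>u v. a \<le> u \<Longrightarrow> u \<le> v \<Longrightarrow> v \<le> b \<Longrightarrow>
      dist (f v) (f u) \<le> (LINT x:{u<..<v}|lborel. G x)"
  shows "abs_continuous_on_interval a b f"
  unfolding abs_continuous_on_interval_def
proof (intro allI impI)
  fix \<epsilon> :: real assume "0 < \<epsilon>"
  obtain \<delta> where "0 < \<delta>" and \<delta>: "\<And>A. A \<in> fmeasurable lborel \<Longrightarrow> measure lborel A < \<delta> \<Longrightarrow>
      (LINT x:A|lborel. G x) < \<epsilon>"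
    using set_integral_small_measure[OF G \<open>0 < \<epsilon>\<close>] by blast
  show "\<exists>\<delta>>0. \<forall>(n::nat) (u::nat \<Rightarrow> real) (v::nat \<Rightarrow> real). (\<forall>i<n. a \<le> u i \<and> u i \<le> v i \<and> v i \<le> b) \<longrightarrow>
      (\<forall>i<n. \<forall>j<n. i \<noteq> j \<longrightarrow> {u i<..<v i} \<inter> {u j<..<v j} = {}) \<longrightarrow>
      (\<Sum>i<n. v i - u i) < \<delta> \<longrightarrow> (\<Sum>i<n. dist (f (v i)) (f (u i))) < \<epsilon>"
  proof (intro exI[of _ \<delta>] conjI allI impI \<open>0 < \<delta>\<close>)
    fix n :: nat and u v :: "nat \<Rightarrow> real"
    assume uv: "\<forall>i<n. a \<le> u i \<and> u i \<le> v i \<and> v i \<le> b"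
      and disj: "\<forall>i<n. \<forall>j<n. i \<noteq> j \<longrightarrow> {u i<..<v i} \<inter> {u j<..<v j} = {}"
      and short: "(\<Sum>i<n. v i - u i) < \<delta>"
    let ?U = "\<Union>i<n. {u i<..<v i}"
    have "(\<Sum>i<n. dist (f (v i)) (f (u i))) \<le> (\<Sum>i<n. LINT x:{u i<..<v i}|lborel. G x)"
      using uv bound by (intro sum_mono) auto
    also have "\<dots> = (LINT x:?U|lborel. G x)"
    proof (rule set_integral_finite_Union[symmetric])
      show "disjoint_family_on (\<lambda>i. {u i<..<v i}) {..<n}"
        using disj by (auto simp: disjoint_family_on_def)
      show "set_integrable lborel {u i<..<v i} G" for i
        unfolding set_integrable_def by (rule integrable_mult_indicator[OF _ G(1)]) simp
    qed auto
    also have "\<dots> < \<epsilon>"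
    proof (rule \<delta>)
      show "?U \<in> fmeasurable lborel"
        by (intro fmeasurable.finite_UN) (auto simp flip: box_real)
      have "measure lborel ?U \<le> (\<Sum>i<n. measure lborel {u i<..<v i})"
        by (intro measure_UNION_le) auto
      also have "\<dots> = (\<Sum>i<n. v i - u i)"
        using uv by simp
      finally show "measure lborel ?U < \<delta>" using short by linarith
    qed
    finally show "(\<Sum>i<n. dist (f (v i)) (f (u i))) < \<epsilon>" .
  qed
qed

theorem theorem3p6:
  fixes f :: "real \<Rightarrow> 'a::metric_space" and a b :: real
  assumes "continuous_on {a..b} f"
    and "countable E"
    and "\<forall>x\<in>{a..b} - E. md_exists f a b x"
    and "set_integrable lborel {a..b} (md f a b)"
  shows "abs_continuous_on_interval a b f"
proof -
  define G where "G x = indicator {a..b} x * \<bar>md f a b x\<bar>" for x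
  have G: "integrable lborel G"
    using integrable_abs[OF assms(4)[unfolded set_integrable_def]]
    unfolding G_def by (simp add: abs_mult)
  show ?thesis
  proof (rule abs_continuous_on_interval_of_dist_le_set_integral[OF G])
    fix u v assume uv: "a \<le> u" "u \<le> v" "v \<le> b"
    show "dist (f v) (f u) \<le> (LINT x:{u<..<v}|lborel. G x)"
    proof (rule dist_le_set_integral_of_md_le[OF assms(1-3) _ _ uv])
      show "set_integrable lborel {u<..<v} G"
        unfolding set_integrable_def by (rule integrable_mult_indicator[OF _ G]) simp
      show "md f a b x \<le> G x" if "x \<in> {u..v} - E" for x
        using that uv by (simp add: G_def)
    qed
  qed (simp add: G_def)
qed

end
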